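(* Let $n,r\ge 1$ be integers and $t_0\in\mathbb R$. Let $g:\mathbb R\times V\to\mathbb R^r$, $V\subseteq\mathbb R^r$ open, be continuous in $t$ and continuously differentiable in $z\in V$. For $i,j\in[n]$ let $w_{ij}(t,x)$ ($t\in\mathbb R$, $x\in\mathbb R^{nr}$) be continuous in $t$ and continuously differentiable in $x$, and suppose there are $\bar w<\infty$ and a non-negative, integrable, non-increasing function $\psi$ with $$\bar w\ \ge\ \sup_{t\ge t_0}\sup_x\max_{i\ne j}w_{ij}(t,x)\ \ge\ \inf_t w_{ij}(t,x)\ \ge\ \psi(S(x)).$$ Let $(x(t),v(t))$, $t\in[t_0,T)$, be the maximal solution of $$\dot x_i=v_i,\qquad \dot v_i=g(t,v_i)+\sum_{j=1}^n w_{ij}(t,x)(v_j-v_i),\quad t\ge t_0,\qquad x_i(t_0)=x_i^0,\ v_i(t_0)=v_i^0\in\mathbb R^r\ (i\in[n]),$$ and let $K=\sup_{t\in[t_0,T)}\max_{i,i'\in[n],l\in[r]}K(t,l,v_i(t),v_{i'}(t))$. Then for all $t\in[t_0,T)$, $$\frac{d}{dt}S(v(t))\le\big[K-n\psi(S(x(t)))\big]S(v(t)),$$ where $\frac{d}{dt}$ denotes the right-hand Dini derivative.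
   Context: $[k]=\{1,\dots,k\}$. For $y=(y_1,\dots,y_n)\in\mathbb R^{nr}$ with $y_i=(y_i^{(1)},\dots,y_i^{(r)})$, $S(y)=\max_{l\in[r]}\max_{i,j}|y_i^{(l)}-y_j^{(l)}|$. For $t\in\mathbb R$, $l\in[r]$, $y,w\in\mathbb R^r$, $$K(t,l,y,w)=\int_0^1\frac{\partial g^{(l)}}{\partial z^{(l)}}(t,qy+(1-q)w)\,dq+\sum_{h\ne l}\Big|\int_0^1\frac{\partial g^{(l)}}{\partial z^{(h)}}(t,qy+(1-q)w)\,dq\Big|.$$ *)

theory Defs
  imports "HOL-Analysis.Analysis"
begin

text \<open>Agents are indexed by a finite type 'n (so n = CARD('n) \<ge> 1), coordinates by a
finite type 'r (so r = CARD('r) \<ge> 1). A point of R^(nr) is a y :: real^'r^'n with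
y$i$l = y_i^(l).\<close>

definition S :: "real^'r::finite^'n::finite \<Rightarrow> real" where
  "S y = Max {\<bar>y$i$l - y$j$l\<bar> | i j l. True}"

text \<open>Partial derivative dg^(l)/dz^(h)(t,z) read off the Frechet derivative Dg t z of g t at z.\<close>
definition Kfun :: "(real \<Rightarrow> real^'r::finite \<Rightarrow> ((real^'r) \<Rightarrow>\<^sub>L (real^'r))) \<Rightarrow> real \<Rightarrow> 'r \<Rightarrow>
    real^'r \<Rightarrow> real^'r \<Rightarrow> real" where
  "Kfun Dg t l y w =
     integral {0..1} (\<lambda>q. (blinfun_apply (Dg t (q *\<^sub>R y + (1 - q) *\<^sub>R w)) (axis l 1)) $ l)
     + (\<Sum>h\<in>UNIV - {l}.
         \<bar>integral {0..1} (\<lambda>q. (blinfun_apply (Dg t (q *\<^sub>R y + (1 - q) *\<^sub>R w)) (axis h 1)) $ l)\<bar>)"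

definition is_solution ::
  "(real^'r::finite) set \<Rightarrow> (real \<Rightarrow> real^'r \<Rightarrow> real^'r) \<Rightarrow> (real \<Rightarrow> real^'r^'n::finite \<Rightarrow> 'n \<Rightarrow> 'n \<Rightarrow> real)
   \<Rightarrow> real \<Rightarrow> real^'r^'n \<Rightarrow> real^'r^'n \<Rightarrow> ereal
   \<Rightarrow> (real \<Rightarrow> real^'r^'n) \<Rightarrow> (real \<Rightarrow> real^'r^'n) \<Rightarrow> bool" where
  "is_solution V g w t0 x0 v0 T x v \<longleftrightarrow>
     ereal t0 < T \<and> x t0 = x0 \<and> v t0 = v0 \<and>
     (\<forall>t. t0 \<le> t \<and> ereal t < T \<longrightarrow>
        (\<forall>i. v t $ i \<in> V) \<and>
        (x has_vector_derivative v t) (at t within {t0..}) \<and>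
        (v has_vector_derivative
            (\<chi> i. g t (v t $ i) + (\<Sum>j\<in>UNIV. w t (x t) i j *\<^sub>R (v t $ j - v t $ i))))
          (at t within {t0..}))"

definition is_maximal_solution ::
  "(real^'r::finite) set \<Rightarrow> (real \<Rightarrow> real^'r \<Rightarrow> real^'r) \<Rightarrow> (real \<Rightarrow> real^'r^'n::finite \<Rightarrow> 'n \<Rightarrow> 'n \<Rightarrow> real)
   \<Rightarrow> real \<Rightarrow> real^'r^'n \<Rightarrow> real^'r^'n \<Rightarrow> ereal
   \<Rightarrow> (real \<Rightarrow> real^'r^'n) \<Rightarrow> (real \<Rightarrow> real^'r^'n) \<Rightarrow> bool" where
  "is_maximal_solution V g w t0 x0 v0 T x v \<longleftrightarrow>
     is_solution V g w t0 x0 v0 T x v \<and>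
     (\<forall>T' x' v'. is_solution V g w t0 x0 v0 T' x' v' \<and> T \<le> T' \<and>
        (\<forall>t. t0 \<le> t \<and> ereal t < T \<longrightarrow> x' t = x t \<and> v' t = v t) \<longrightarrow> T' = T)"

definition dini_right :: "(real \<Rightarrow> real) \<Rightarrow> real \<Rightarrow> ereal" where
  "dini_right f t = Limsup (at_right t) (\<lambda>s. ereal ((f s - f t) / (s - t)))"

end

theory Submission
  imports Defs
begin

text \<open>At a time t where the spread S(v) is attained by the pair (i,j) in coordinate l, the
right derivative of v_i^(l) - v_j^(l) splits into a drift part and a coupling part. The drift
g(t,v_i)^(l) - g(t,v_j)^(l) is, by the integral mean value theorem along the segment from v_j
to v_i, a combination of the averaged partial derivatives; since |v_i^(h) - v_j^(h)| \<le> S(v) =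
v_i^(l) - v_j^(l), it is at most K(t,l,v_i,v_j) S(v). In the coupling part every term pulls the
maximal v_i^(l) down and the minimal v_j^(l) up with weight at least \<psi>(S(x)), which
contributes at most -n \<psi>(S(x)) S(v). Finally the Dini derivative of a maximum of finitely
many right-differentiable functions is bounded by the derivatives of the active ones.\<close>

lemma S_eq_Max_diff:
  "S y = Max (range (\<lambda>(i, j, l). y$i$l - y$j$l))"
proof -
  let ?diff = "\<lambda>(i, j, l). y$i$l - y$j$l"
  have "{\<bar>y$i$l - y$j$l\<bar> | i j l. True} = (\<lambda>a. \<bar>?diff a\<bar>) ` UNIV"
    by (auto intro!: image_eqI[of _ _ "(i, j, l)" for i j l])
  moreover have "Max ((\<lambda>a. \<bar>?diff a\<bar>) ` UNIV) = Max (range ?diff)"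
  proof (rule Max_eq_if)
    show "\<forall>b\<in>(\<lambda>a. \<bar>?diff a\<bar>) ` UNIV. \<exists>c\<in>range ?diff. b \<le> c"
    proof
      fix b assume "b \<in> (\<lambda>a. \<bar>?diff a\<bar>) ` UNIV"
      then obtain i j l where b: "b = \<bar>?diff (i, j, l)\<bar>"
        by auto
      have "b \<le> ?diff (i, j, l) \<or> b \<le> ?diff (j, i, l)"
        unfolding b by auto
      then show "\<exists>c\<in>range ?diff. b \<le> c"
        by blast
    qed
  qed (auto intro: abs_ge_self)
  ultimately show ?thesis
    unfolding S_def by simp
qed

lemma diff_le_S: "y$i$l - y$j$l \<le> S y"
  unfolding S_eq_Max_diff by (rule Max_ge) (auto intro!: image_eqI[of _ _ "(i, j, l)"])

lemma abs_diff_le_S: "\<bar>y$i$l - y$j$l\<bar> \<le> S y"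
  using diff_le_S[of y i l j] diff_le_S[of y j l i] by linarith

lemma S_nonneg: "0 \<le> S y"
  using abs_diff_le_S[of y i l i] by simp

lemma sum_axis_expansion: "(\<Sum>h\<in>UNIV. (y $ h) *\<^sub>R axis h (1::real)) = (y :: real^'r::finite)"
  by (simp add: vec_eq_iff axis_def if_distrib cong: if_cong)

lemma component_diff_eq_integral_partials:
  fixes g :: "real^'r::finite \<Rightarrow> real^'r" and Dg :: "real \<Rightarrow> real^'r \<Rightarrow> ((real^'r) \<Rightarrow>\<^sub>L (real^'r))"
  assumes g_deriv: "\<And>z. z \<in> V \<Longrightarrow> (g has_derivative blinfun_apply (Dg t z)) (at z)"
    and Dg_cont: "continuous_on V (Dg t)"
    and seg: "closed_segment w y \<subseteq> V"
  shows "g y $ l - g w $ l = (\<Sum>h\<in>UNIV. (y - w) $ h *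
           integral {0..1} (\<lambda>q. blinfun_apply (Dg t (q *\<^sub>R y + (1 - q) *\<^sub>R w)) (axis h 1) $ l))"
proof -
  define \<gamma> where "\<gamma> q = q *\<^sub>R y + (1 - q) *\<^sub>R w" for q :: real
  define P where "P h q = blinfun_apply (Dg t (\<gamma> q)) (axis h 1) $ l" for h q
  have \<gamma>_in_V: "\<gamma> q \<in> V" if "q \<in> {0..1}" for q
  proof -
    have "\<gamma> q \<in> closed_segment w y"
      using that unfolding closed_segment_def \<gamma>_def by (auto intro!: exI[of _ q] simp: algebra_simps)
    then show ?thesis using seg by auto
  qed
  have "((g \<circ> \<gamma>) has_vector_derivative blinfun_apply (Dg t (\<gamma> q)) (y - w)) (at q within {0..1})"
    if "q \<in> {0..1}" for q
  proof -
    have "(\<gamma> has_vector_derivative (y - w)) (at q within {0..1})"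
      unfolding \<gamma>_def by (auto intro!: derivative_eq_intros simp: algebra_simps)
    moreover have "(g has_derivative blinfun_apply (Dg t (\<gamma> q))) (at (\<gamma> q) within \<gamma> ` {0..1})"
      using g_deriv[OF \<gamma>_in_V[OF that]] by (rule has_derivative_at_withinI)
    ultimately show ?thesis
      unfolding has_vector_derivative_def
      by (auto dest: diff_chain_within simp: o_def blinfun.scaleR_right)
  qed
  then have "((\<lambda>q. blinfun_apply (Dg t (\<gamma> q)) (y - w)) has_integral (g \<circ> \<gamma>) 1 - (g \<circ> \<gamma>) 0) {0..1}"
    by (intro fundamental_theorem_of_calculus) (auto simp: o_def)
  from has_integral_linear[OF this bounded_linear_vec_nth[of l]]
  have "((\<lambda>q. blinfun_apply (Dg t (\<gamma> q)) (y - w) $ l) has_integral g y $ l - g w $ l) {0..1}"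
    by (simp add: o_def \<gamma>_def)
  moreover have "blinfun_apply (Dg t (\<gamma> q)) (y - w) $ l = (\<Sum>h\<in>UNIV. (y - w) $ h * P h q)" for q
  proof -
    have "blinfun_apply (Dg t (\<gamma> q)) (y - w)
            = blinfun_apply (Dg t (\<gamma> q)) (\<Sum>h\<in>UNIV. ((y - w) $ h) *\<^sub>R axis h 1)"
      by (simp only: sum_axis_expansion)
    then show ?thesis
      by (simp add: P_def blinfun.sum_right blinfun.scaleR_right)
  qed
  moreover have "continuous_on {0..1} (P h)" for h
  proof -
    have "continuous_on {0..1} \<gamma>"
      unfolding \<gamma>_def by (intro continuous_intros)
    then have "continuous_on {0..1} (Dg t \<circ> \<gamma>)"
      using \<gamma>_in_V by (intro continuous_on_compose continuous_on_subset[OF Dg_cont]) auto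
    then show ?thesis unfolding P_def by (intro continuous_intros) (simp add: o_def)
  qed
  then have "((\<lambda>q. \<Sum>h\<in>UNIV. (y - w) $ h * P h q)
               has_integral (\<Sum>h\<in>UNIV. (y - w) $ h * integral {0..1} (P h))) {0..1}"
    by (intro has_integral_sum has_integral_mult_right integrable_integral integrable_continuous_real) auto
  ultimately show ?thesis
    unfolding P_def \<gamma>_def by (simp add: has_integral_unique)
qed

lemma component_diff_le_Kfun:
  fixes g :: "real^'r::finite \<Rightarrow> real^'r" and Dg :: "real \<Rightarrow> real^'r \<Rightarrow> ((real^'r) \<Rightarrow>\<^sub>L (real^'r))"
  assumes g_deriv: "\<And>z. z \<in> V \<Longrightarrow> (g has_derivative blinfun_apply (Dg t z)) (at z)"
    and Dg_cont: "continuous_on V (Dg t)"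
    and seg: "closed_segment w y \<subseteq> V"
    and gap: "y $ l - w $ l = F" and dominated: "\<And>h. \<bar>y $ h - w $ h\<bar> \<le> F"
  shows "g y $ l - g w $ l \<le> Kfun Dg t l y w * F"
proof -
  define I where "I h = integral {0..1} (\<lambda>q. blinfun_apply (Dg t (q *\<^sub>R y + (1 - q) *\<^sub>R w)) (axis h 1) $ l)"
    for h
  have term_le: "(y - w) $ h * I h \<le> F * \<bar>I h\<bar>" for h
    using mult_right_mono[OF dominated[of h], of "\<bar>I h\<bar>"] abs_ge_self[of "(y - w) $ h * I h"]
    by (simp add: abs_mult)
  have "g y $ l - g w $ l = (\<Sum>h\<in>UNIV. (y - w) $ h * I h)"
    unfolding I_def
    by (rule component_diff_eq_integral_partials[where V = V and g = g and Dg = Dg and t = t,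
          OF g_deriv Dg_cont seg])
  also have "\<dots> = F * I l + (\<Sum>h\<in>UNIV - {l}. (y - w) $ h * I h)"
    using gap by (simp add: sum.remove[of UNIV l])
  also have "\<dots> \<le> F * I l + (\<Sum>h\<in>UNIV - {l}. F * \<bar>I h\<bar>)"
    by (intro add_left_mono sum_mono term_le)
  also have "\<dots> = Kfun Dg t l y w * F"
    by (simp add: Kfun_def I_def algebra_simps sum_distrib_left)
  finally show ?thesis .
qed

lemma consensus_coupling_le:
  fixes u :: "'n::finite \<Rightarrow> real" and W :: "'n \<Rightarrow> 'n \<Rightarrow> real"
  assumes W_lower: "\<And>a k. a \<noteq> k \<Longrightarrow> p \<le> W a k"
    and u_max: "\<And>k. u k \<le> u i" and u_min: "\<And>k. u j \<le> u k"
  shows "(\<Sum>k\<in>UNIV. W i k * (u k - u i)) - (\<Sum>k\<in>UNIV. W j k * (u k - u j))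
           \<le> - (real CARD('n) * p * (u i - u j))"
proof -
  have "W i k * (u k - u i) \<le> p * (u k - u i)" for k
    using W_lower[of i k] u_max[of k] by (cases "k = i") (auto intro: mult_right_mono_neg)
  moreover have "p * (u k - u j) \<le> W j k * (u k - u j)" for k
    using W_lower[of j k] u_min[of k] by (cases "k = j") (auto intro: mult_right_mono)
  ultimately have "(\<Sum>k\<in>UNIV. W i k * (u k - u i)) - (\<Sum>k\<in>UNIV. W j k * (u k - u j))
                     \<le> (\<Sum>k\<in>UNIV. p * (u k - u i)) - (\<Sum>k\<in>UNIV. p * (u k - u j))"
    by (intro diff_mono sum_mono)
  also have "\<dots> = - (real CARD('n) * p * (u i - u j))"
    by (simp add: sum_subtractf algebra_simps flip: sum_distrib_left)
  finally show ?thesis .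
qed

lemma extremal_gap_derivative_le:
  fixes g :: "real^'r::finite \<Rightarrow> real^'r" and Dg :: "real \<Rightarrow> real^'r \<Rightarrow> ((real^'r) \<Rightarrow>\<^sub>L (real^'r))"
    and y :: "real^'r^'n::finite" and W :: "'n \<Rightarrow> 'n \<Rightarrow> real"
  assumes g_deriv: "\<And>z. z \<in> V \<Longrightarrow> (g has_derivative blinfun_apply (Dg t z)) (at z)"
    and Dg_cont: "continuous_on V (Dg t)"
    and seg: "closed_segment (y $ j) (y $ i) \<subseteq> V"
    and attained: "y$i$l - y$j$l = S y"
    and K_upper: "Kfun Dg t l (y $ i) (y $ j) \<le> K"
    and W_lower: "\<And>a k. a \<noteq> k \<Longrightarrow> p \<le> W a k"
  shows "(g (y $ i) + (\<Sum>k\<in>UNIV. W i k *\<^sub>R (y $ k - y $ i))) $ l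
         - (g (y $ j) + (\<Sum>k\<in>UNIV. W j k *\<^sub>R (y $ k - y $ j))) $ l
         \<le> (K - real CARD('n) * p) * S y"
proof -
  have "g (y $ i) $ l - g (y $ j) $ l \<le> Kfun Dg t l (y $ i) (y $ j) * S y"
    using attained abs_diff_le_S[of y i _ j]
    by (intro component_diff_le_Kfun[where V = V and g = g and Dg = Dg and t = t, OF g_deriv Dg_cont seg]) auto
  also have "\<dots> \<le> K * S y"
    using K_upper S_nonneg by (rule mult_right_mono)
  finally have drift: "g (y $ i) $ l - g (y $ j) $ l \<le> K * S y" .
  have "(\<Sum>k\<in>UNIV. W i k * (y$k$l - y$i$l)) - (\<Sum>k\<in>UNIV. W j k * (y$k$l - y$j$l))
          \<le> - (real CARD('n) * p * (y$i$l - y$j$l))"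
  proof (rule consensus_coupling_le[OF W_lower])
    show "y$k$l \<le> y$i$l" "y$j$l \<le> y$k$l" for k
      using diff_le_S[of y k l j] diff_le_S[of y i l k] attained by linarith+
  qed
  with drift attained show ?thesis
    by (simp add: algebra_simps)
qed

lemma eventually_right_increment_le:
  fixes f :: "real \<Rightarrow> real"
  assumes deriv: "(f has_real_derivative d) (at_right t)"
    and below: "f t \<le> M" and active: "f t = M \<Longrightarrow> d < c"
  shows "\<forall>\<^sub>F s in at_right t. f s - M \<le> c * (s - t)"
proof (cases "f t = M")
  case True
  have "((\<lambda>s. (f s - f t) / (s - t)) \<longlongrightarrow> d) (at_right t)"
    using deriv by (simp add: has_field_derivative_iff)
  then have "\<forall>\<^sub>F s in at_right t. (f s - f t) / (s - t) < c"
    using active[OF True] by (rule order_tendstoD)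
  with eventually_at_right_less[of t] show ?thesis
    by eventually_elim (use True in \<open>simp add: divide_less_eq\<close>)
next
  case False
  have "continuous (at_right t) f"
    using deriv by (rule DERIV_continuous)
  then have "((\<lambda>s. f s - M - c * (s - t)) \<longlongrightarrow> f t - M - c * (t - t)) (at_right t)"
    by (intro tendsto_intros) (auto simp: continuous_within)
  then have "\<forall>\<^sub>F s in at_right t. f s - M - c * (s - t) < 0"
    using False below by (intro order_tendstoD) auto
  then show ?thesis
    by eventually_elim simp
qed

lemma dini_right_Max_le:
  fixes f :: "'a::finite \<Rightarrow> real \<Rightarrow> real"
  assumes deriv: "\<And>a. (f a has_real_derivative d a) (at_right t)"
    and active: "\<And>a. f a t = Max (range (\<lambda>b. f b t)) \<Longrightarrow> d a \<le> c"
  shows "dini_right (\<lambda>s. Max (range (\<lambda>a. f a s))) t \<le> ereal c"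
  unfolding dini_right_def
proof (rule ereal_le_epsilon2)
  fix e :: real assume "0 < e"
  define F where "F s = Max (range (\<lambda>a. f a s))" for s
  have "\<forall>\<^sub>F s in at_right t. \<forall>a. f a s - F t \<le> (c + e) * (s - t)"
    using deriv active \<open>0 < e\<close>
    by (intro eventually_all_finite allI eventually_right_increment_le) (force simp: F_def)+
  with eventually_at_right_less[of t]
  have "\<forall>\<^sub>F s in at_right t. (F s - F t) / (s - t) \<le> c + e"
  proof eventually_elim
    case (elim s)
    then have "F s \<le> F t + (c + e) * (s - t)"
      unfolding F_def[of s] by (subst Max_le_iff) (auto simp: algebra_simps)
    with elim show ?case
      by (simp add: divide_le_eq algebra_simps)
  qed
  then have "Limsup (at_right t) (\<lambda>s. ereal ((F s - F t) / (s - t))) \<le> ereal (c + e)"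
    by (intro Limsup_bounded) (auto elim: eventually_mono)
  then show "Limsup (at_right t) (\<lambda>s. ereal ((F s - F t) / (s - t))) \<le> ereal c + ereal e"
    by simp
qed

lemma dini_right_spread_le:
  fixes g :: "real^'r::finite \<Rightarrow> real^'r" and Dg :: "real \<Rightarrow> real^'r \<Rightarrow> ((real^'r) \<Rightarrow>\<^sub>L (real^'r))"
    and v :: "real \<Rightarrow> real^'r^'n::finite" and W :: "'n \<Rightarrow> 'n \<Rightarrow> real"
  assumes g_deriv: "\<And>z. z \<in> V \<Longrightarrow> (g has_derivative blinfun_apply (Dg t z)) (at z)"
    and Dg_cont: "continuous_on V (Dg t)"
    and v_deriv: "(v has_vector_derivative
                    (\<chi> i. g (v t $ i) + (\<Sum>k\<in>UNIV. W i k *\<^sub>R (v t $ k - v t $ i)))) (at_right t)"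
    and seg: "\<And>i i'. closed_segment (v t $ i) (v t $ i') \<subseteq> V"
    and K_upper: "\<And>l i i'. Kfun Dg t l (v t $ i) (v t $ i') \<le> K"
    and W_lower: "\<And>a k. a \<noteq> k \<Longrightarrow> p \<le> W a k"
  shows "dini_right (\<lambda>s. S (v s)) t \<le> ereal ((K - real CARD('n) * p) * S (v t))"
proof -
  define v' where "v' = (\<chi> i. g (v t $ i) + (\<Sum>k\<in>UNIV. W i k *\<^sub>R (v t $ k - v t $ i)))"
  define f where "f a s = (case a of (i, j, l) \<Rightarrow> v s $ i $ l - v s $ j $ l)" for a s
  define d where "d a = (case a of (i, j, l) \<Rightarrow> v' $ i $ l - v' $ j $ l)" for a
  have S_v: "S (v s) = Max (range (\<lambda>a. f a s))" for s
    by (simp add: S_eq_Max_diff f_def)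
  have "dini_right (\<lambda>s. Max (range (\<lambda>a. f a s))) t \<le> ereal ((K - real CARD('n) * p) * S (v t))"
  proof (rule dini_right_Max_le)
    fix a :: "'n \<times> 'n \<times> 'r"
    obtain i j l where a: "a = (i, j, l)" by (cases a)
    have "bounded_linear (\<lambda>z :: real^'r^'n. z $ i $ l - z $ j $ l)"
      by (intro bounded_linear_sub bounded_linear_compose[OF bounded_linear_vec_nth] bounded_linear_vec_nth)
    from bounded_linear.has_vector_derivative[OF this v_deriv[folded v'_def]]
    show "(f a has_real_derivative d a) (at_right t)"
      by (simp add: a f_def[abs_def] d_def has_real_derivative_iff_has_vector_derivative)
    assume "f a t = Max (range (\<lambda>b. f b t))"
    then have "v t $ i $ l - v t $ j $ l = S (v t)"
      by (simp add: S_v a f_def)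
    then show "d a \<le> (K - real CARD('n) * p) * S (v t)"
      unfolding a d_def v'_def using seg[of j i] K_upper[of l i j] W_lower
      by (simp only: vec_lambda_beta prod.case)
        (rule extremal_gap_derivative_le[where V = V and g = g and Dg = Dg and t = t, OF g_deriv Dg_cont])
  qed
  then show ?thesis
    by (simp add: S_v)
qed

text \<open>Only the C^1 hypothesis on g, the lower bound \<psi>(S(x)) on the weights, the segment condition
and the boundedness of K are used; the remaining hypotheses (bounds on w, integrability and
monotonicity of \<psi>, maximality of the solution) are standing assumptions of the paper that this
estimate does not need.\<close>

theorem lemma1:
  fixes V :: "(real^'r::finite) set"
    and g :: "real \<Rightarrow> real^'r \<Rightarrow> real^'r"
    and Dg :: "real \<Rightarrow> real^'r \<Rightarrow> ((real^'r) \<Rightarrow>\<^sub>L (real^'r))"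
    and w :: "real \<Rightarrow> real^'r^'n::finite \<Rightarrow> 'n \<Rightarrow> 'n \<Rightarrow> real"
    and Dw :: "real \<Rightarrow> real^'r^'n \<Rightarrow> 'n \<Rightarrow> 'n \<Rightarrow> ((real^'r^'n) \<Rightarrow>\<^sub>L real)"
    and \<psi> :: "real \<Rightarrow> real"
    and t0 wbar :: real and T :: ereal
    and x0 v0 :: "real^'r^'n"
    and x v :: "real \<Rightarrow> real^'r^'n"
  assumes V_open: "open V"
    and g_cont_t: "\<And>z. z \<in> V \<Longrightarrow> continuous_on UNIV (\<lambda>t. g t z)"
    and g_deriv: "\<And>t z. z \<in> V \<Longrightarrow> (g t has_derivative blinfun_apply (Dg t z)) (at z)"
    and g_deriv_cont: "\<And>t. continuous_on V (Dg t)"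
    and w_cont_t: "\<And>x i j. continuous_on UNIV (\<lambda>t. w t x i j)"
    and w_deriv: "\<And>t x i j. ((\<lambda>y. w t y i j) has_derivative blinfun_apply (Dw t x i j)) (at x)"
    and w_deriv_cont: "\<And>t i j. continuous_on UNIV (\<lambda>x. Dw t x i j)"
    and w_upper: "\<And>t x i j. t \<ge> t0 \<Longrightarrow> i \<noteq> j \<Longrightarrow> w t x i j \<le> wbar"
    and w_lower: "\<And>t x i j. i \<noteq> j \<Longrightarrow> \<psi> (S x) \<le> w t x i j"
    and psi_nonneg: "\<And>s. 0 \<le> s \<Longrightarrow> 0 \<le> \<psi> s"
    and psi_integrable: "\<psi> integrable_on {0..}"
    and psi_noninc: "\<And>a b. 0 \<le> a \<Longrightarrow> a \<le> b \<Longrightarrow> \<psi> b \<le> \<psi> a"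
    and sol: "is_maximal_solution V g w t0 x0 v0 T x v"
    and seg: "\<And>t i i'. t0 \<le> t \<Longrightarrow> ereal t < T \<Longrightarrow> closed_segment (v t $ i) (v t $ i') \<subseteq> V"
    and K_bdd: "bdd_above {Kfun Dg t l (v t $ i) (v t $ i') | t i i' l. t0 \<le> t \<and> ereal t < T}"
  shows "\<forall>t. t0 \<le> t \<and> ereal t < T \<longrightarrow>
           dini_right (\<lambda>s. S (v s)) t
             \<le> ereal ((Sup {Kfun Dg t l (v t $ i) (v t $ i') | t i i' l. t0 \<le> t \<and> ereal t < T}
                        - real CARD('n) * \<psi> (S (x t))) * S (v t))"
proof (intro allI impI)
  fix t assume t: "t0 \<le> t \<and> ereal t < T"
  have "(v has_vector_derivative
           (\<chi> i. g t (v t $ i) + (\<Sum>j\<in>UNIV. w t (x t) i j *\<^sub>R (v t $ j - v t $ i))))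
          (at t within {t0..})"
    using sol t unfolding is_maximal_solution_def is_solution_def by blast
  then have v_deriv: "(v has_vector_derivative
           (\<chi> i. g t (v t $ i) + (\<Sum>j\<in>UNIV. w t (x t) i j *\<^sub>R (v t $ j - v t $ i)))) (at_right t)"
    by (rule has_vector_derivative_within_subset) (use t in auto)
  have K_upper: "Kfun Dg t l (v t $ i) (v t $ i')
                   \<le> Sup {Kfun Dg t l (v t $ i) (v t $ i') | t i i' l. t0 \<le> t \<and> ereal t < T}" for l i i'
    using t by (intro cSup_upper K_bdd) blast
  show "dini_right (\<lambda>s. S (v s)) t
          \<le> ereal ((Sup {Kfun Dg t l (v t $ i) (v t $ i') | t i i' l. t0 \<le> t \<and> ereal t < T}
                     - real CARD('n) * \<psi> (S (x t))) * S (v t))"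
    using g_deriv g_deriv_cont v_deriv seg t K_upper w_lower
    by (intro dini_right_spread_le[where V = V and g = "g t" and Dg = Dg and W = "w t (x t)"]) auto
qed

end
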